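(* Let $\alpha>-1$ and let $W(x,y)=\dfrac{x^{\alpha}y^{\alpha+1}e^{-x-y}}{x+y}$ on $(0,\infty)^2$. Let $\{p_k\}_{k\ge0}$, $\{q_k\}_{k\ge0}$ be the monic Cauchy–Laguerre biorthogonal polynomials, i.e. $\deg p_k=\deg q_k=k$, both monic, with $$\int_0^\infty\!\!\int_0^\infty p_k(x)q_l(y)W(x,y)\,dx\,dy=h_k\delta_{kl}.$$ Write $p_k(x)=\sum_{i=0}^k a_{k,i}x^i$ with $a_{k,k}=1$, and define for each $\beta\in\mathbb{N}$ the numbers $b_{\beta,i}$, $0\le i\le\beta$, recursively by $b_{\beta,0}=1$ and $b_{\beta,i}=-\sum_{j=0}^{i-1}b_{\beta,j}\,a_{\beta-j,\beta-i}$. Then for all integers $\beta\ge k\ge0$, $$\int_0^\infty\!\!\int_0^\infty x^{\beta}q_k(y)W(x,y)\,dx\,dy=b_{\beta,\beta-k}\,h_k.$$ *)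

theory Defs
  imports "HOL-Analysis.Analysis" "HOL-Computational_Algebra.Polynomial"
begin

definition CL_weight :: "real \<Rightarrow> real \<Rightarrow> real \<Rightarrow> real" where
  "CL_weight \<alpha> x y = x powr \<alpha> * y powr (\<alpha> + 1) * exp (- x - y) / (x + y)"

definition dbl_int :: "(real \<Rightarrow> real \<Rightarrow> real) \<Rightarrow> real" where
  "dbl_int f = (LBINT y:{0<..}. (LBINT x:{0<..}. f x y))"

function bcoef :: "(nat \<Rightarrow> real poly) \<Rightarrow> nat \<Rightarrow> nat \<Rightarrow> real" where
  "bcoef p \<beta> i = (if i = 0 then 1
     else - (\<Sum>j<i. bcoef p \<beta> j * coeff (p (\<beta> - j)) (\<beta> - i)))"
  by auto
termination by (relation "Wellfounded.measure (\<lambda>(p, \<beta>, i). i)") auto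

end

theory Submission
  imports Defs
begin

text \<open>Since each \<open>p k\<close> is monic of degree \<open>k\<close>, \<open>x^\<beta> = \<Sum>i\<le>\<beta>. b(\<beta>,i) p(\<beta>-i)(x)\<close>, the
  recursion defining \<open>b\<close> being back-substitution in this unitriangular change of basis. Pairing
  against \<open>q k (y) W(x,y)\<close> is linear in the polynomial in \<open>x\<close>: as \<open>y/(x+y) \<le> 1\<close>, every integrand
  is dominated by a product of the Laguerre weights \<open>x^\<alpha> e^-x\<close> and \<open>y^\<alpha> e^-y\<close>, so Fubini
  applies. By biorthogonality only the term with \<open>\<beta> - i = k\<close> survives.\<close>

lemma set_integrable_Gamma_kernel:
  assumes "s > (0::real)"
  shows "set_integrable lborel {0<..} (\<lambda>t. t powr (s - 1) * exp (- t))"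
  unfolding set_integrable_def
proof (rule integrableI_nonneg)
  show "(\<lambda>t. indicat_real {0<..} t *\<^sub>R (t powr (s - 1) * exp (- t))) \<in> borel_measurable lborel"
    by measurable
  show "AE t in lborel. 0 \<le> indicat_real {0<..} t *\<^sub>R (t powr (s - 1) * exp (- t))"
    by simp
  have "(\<integral>\<^sup>+ t. ennreal (indicat_real {0<..} t *\<^sub>R (t powr (s - 1) * exp (- t))) \<partial>lborel)
      = ennreal (Gamma s)"
    unfolding Gamma_conv_nn_integral_real[OF assms]
    by (intro nn_integral_cong) (auto simp: indicator_def exp_minus divide_inverse)
  then show "(\<integral>\<^sup>+ t. ennreal (indicat_real {0<..} t *\<^sub>R (t powr (s - 1) * exp (- t))) \<partial>lborel) < \<infinity>"
    by simp
qed

lemma set_integrable_poly_Laguerre_weight: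
  fixes P :: "real poly"
  assumes "\<alpha> > -1"
  shows "set_integrable lborel {0<..} (\<lambda>x. poly P x * x powr \<alpha> * exp (- x))"
  using assms
proof (induction P arbitrary: \<alpha>)
  case 0
  then show ?case by (simp add: set_integrable_def)
next
  case (pCons a P)
  have integrable_const: "set_integrable lborel {0<..} (\<lambda>x. a * (x powr \<alpha> * exp (- x)))"
    using set_integrable_Gamma_kernel[of "\<alpha> + 1"] pCons.prems by simp
  have integrable_IH: "set_integrable lborel {0<..} (\<lambda>x. poly P x * x powr (\<alpha> + 1) * exp (- x))"
    using pCons.prems by (intro pCons.IH) simp
  have pCons_split: "poly (pCons a P) x * x powr \<alpha> * exp (- x)
      = a * (x powr \<alpha> * exp (- x)) + poly P x * x powr (\<alpha> + 1) * exp (- x)"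
    if "x \<in> {0<..}" for x
    using that by (simp add: powr_add algebra_simps)
  show ?case
    using set_integral_add(1)[OF integrable_const integrable_IH]
    by (simp only: set_integrable_cong[OF refl refl pCons_split])
qed

lemma (in pair_sigma_finite) set_integrable_times:
  fixes f :: "'a \<Rightarrow> real" and g :: "'b \<Rightarrow> real"
  assumes "set_integrable M1 A f" and "set_integrable M2 B g"
  shows "set_integrable (M1 \<Otimes>\<^sub>M M2) (A \<times> B) (\<lambda>(x, y). f x * g y)"
proof -
  let ?F = "\<lambda>x. indicator A x * f x" and ?G = "\<lambda>y. indicator B y * g y"
  have F: "integrable M1 ?F" and G: "integrable M2 ?G"
    using assms by (simp_all add: set_integrable_def)
  then have [measurable]: "?F \<in> borel_measurable M1" "?G \<in> borel_measurable M2"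
    by auto
  have "integrable (M1 \<Otimes>\<^sub>M M2) (\<lambda>(x, y). ?F x * ?G y)"
  proof (rule Fubini_integrable)
    show "integrable M1 (\<lambda>x. \<integral>y. norm ((\<lambda>(x, y). ?F x * ?G y) (x, y)) \<partial>M2)"
      using integrable_abs[OF F] by (simp add: abs_mult)
    show "AE x in M1. integrable M2 (\<lambda>y. (\<lambda>(x, y). ?F x * ?G y) (x, y))"
      using G by simp
  qed measurable
  then show ?thesis
    unfolding set_integrable_def case_prod_beta by (simp add: indicator_times mult_ac)
qed

lemma abs_CL_weight_le:
  assumes "x > 0" and "y > 0"
  shows "\<bar>CL_weight \<alpha> x y\<bar> \<le> x powr \<alpha> * exp (- x) * (y powr \<alpha> * exp (- y))"
proof -
  have "\<bar>CL_weight \<alpha> x y\<bar> = x powr \<alpha> * exp (- x) * (y powr \<alpha> * exp (- y)) * (y / (x + y))"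
    using assms by (simp add: CL_weight_def powr_add exp_diff exp_minus field_simps)
  also have "\<dots> \<le> x powr \<alpha> * exp (- x) * (y powr \<alpha> * exp (- y))"
    using assms by (intro mult_left_le) auto
  finally show ?thesis .
qed

lemma borel_measurable_poly [measurable]:
  fixes P :: "real poly"
  assumes [measurable]: "f \<in> borel_measurable M"
  shows "(\<lambda>x. poly P (f x)) \<in> borel_measurable M"
proof -
  have "poly P \<in> borel_measurable borel"
    by (intro borel_measurable_continuous_onI continuous_intros)
  then show ?thesis
    by (rule measurable_compose[OF assms])
qed

lemma set_integrable_poly_CL_weight:
  fixes P Q :: "real poly"
  assumes "\<alpha> > -1"
  shows "set_integrable (lborel \<Otimes>\<^sub>M lborel) ({0<..} \<times> {0<..})
    (\<lambda>(y, x). poly P x * poly Q y * CL_weight \<alpha> x y)"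
proof (rule set_integrable_bound)
  show "set_integrable (lborel \<Otimes>\<^sub>M lborel) ({0<..} \<times> {0<..})
      (\<lambda>(y, x). poly Q y * y powr \<alpha> * exp (- y) * (poly P x * x powr \<alpha> * exp (- x)))"
    using assms by (intro lborel_pair.set_integrable_times set_integrable_poly_Laguerre_weight)
  show "set_borel_measurable (lborel \<Otimes>\<^sub>M lborel) ({0<..} \<times> {0<..})
      (\<lambda>(y, x). poly P x * poly Q y * CL_weight \<alpha> x y)"
    unfolding set_borel_measurable_def CL_weight_def by measurable
  show "AE z in lborel \<Otimes>\<^sub>M lborel. z \<in> {0<..} \<times> {0<..} \<longrightarrow>
      norm ((\<lambda>(y, x). poly P x * poly Q y * CL_weight \<alpha> x y) z)
      \<le> norm ((\<lambda>(y, x). poly Q y * y powr \<alpha> * exp (- y) * (poly P x * x powr \<alpha> * exp (- x))) z)"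
  proof (intro AE_I2 impI)
    fix z :: "real \<times> real"
    assume "z \<in> {0<..} \<times> {0<..}"
    then obtain y x where z: "z = (y, x)" and "y > 0" "x > 0"
      by auto
    then have "\<bar>poly P x\<bar> * \<bar>poly Q y\<bar> * \<bar>CL_weight \<alpha> x y\<bar>
        \<le> \<bar>poly P x\<bar> * \<bar>poly Q y\<bar> * (x powr \<alpha> * exp (- x) * (y powr \<alpha> * exp (- y)))"
      by (intro mult_left_mono abs_CL_weight_le) auto
    with \<open>y > 0\<close> \<open>x > 0\<close> show "norm ((\<lambda>(y, x). poly P x * poly Q y * CL_weight \<alpha> x y) z)
      \<le> norm ((\<lambda>(y, x). poly Q y * y powr \<alpha> * exp (- y) * (poly P x * x powr \<alpha> * exp (- x))) z)"
      by (simp add: z abs_mult mult_ac)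
  qed
qed

lemma dbl_int_eq_set_integral:
  assumes "set_integrable (lborel \<Otimes>\<^sub>M lborel) ({0<..} \<times> {0<..}) (\<lambda>(y, x). f x y)"
  shows "dbl_int f = set_lebesgue_integral (lborel \<Otimes>\<^sub>M lborel) ({0<..} \<times> {0<..}) (\<lambda>(y, x). f x y)"
proof -
  have "dbl_int f = (\<integral>y. \<integral>x. indicator ({0<..} \<times> {0<..}) (y, x) *\<^sub>R f x y \<partial>lborel \<partial>lborel)"
    unfolding dbl_int_def set_lebesgue_integral_def by (simp add: indicator_times mult.assoc)
  also have "\<dots> = set_lebesgue_integral (lborel \<Otimes>\<^sub>M lborel) ({0<..} \<times> {0<..}) (\<lambda>(y, x). f x y)"
    using lborel_pair.integral_fst'[OF assms[unfolded set_integrable_def]]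
    by (simp add: set_lebesgue_integral_def case_prod_beta)
  finally show ?thesis .
qed

lemma dbl_int_sum:
  assumes "finite I"
    and "\<And>i. i \<in> I \<Longrightarrow> set_integrable (lborel \<Otimes>\<^sub>M lborel) ({0<..} \<times> {0<..}) (\<lambda>(y, x). f i x y)"
  shows "dbl_int (\<lambda>x y. \<Sum>i\<in>I. c i * f i x y) = (\<Sum>i\<in>I. c i * dbl_int (f i))"
proof -
  have "set_integrable (lborel \<Otimes>\<^sub>M lborel) ({0<..} \<times> {0<..}) (\<lambda>(y, x). \<Sum>i\<in>I. c i * f i x y)"
    using assms unfolding set_integrable_def case_prod_beta scaleR_sum_right
    by (intro Bochner_Integration.integrable_sum) (simp add: mult.left_commute[of _ "c _"])
  then have "dbl_int (\<lambda>x y. \<Sum>i\<in>I. c i * f i x y)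
      = set_lebesgue_integral (lborel \<Otimes>\<^sub>M lborel) ({0<..} \<times> {0<..}) (\<lambda>(y, x). \<Sum>i\<in>I. c i * f i x y)"
    by (rule dbl_int_eq_set_integral)
  also have "\<dots> = (\<Sum>i\<in>I. c i *
      set_lebesgue_integral (lborel \<Otimes>\<^sub>M lborel) ({0<..} \<times> {0<..}) (\<lambda>(y, x). f i x y))"
    using assms unfolding set_lebesgue_integral_def set_integrable_def case_prod_beta scaleR_sum_right
    by (subst Bochner_Integration.integral_sum) (auto simp: mult.left_commute[of _ "c _"])
  also have "\<dots> = (\<Sum>i\<in>I. c i * dbl_int (f i))"
    using assms by (simp add: dbl_int_eq_set_integral)
  finally show ?thesis .
qed

declare bcoef.simps [simp del]

lemma monom_eq_sum_bcoef:
  assumes deg: "\<And>k. degree (p k) = k" and monic: "\<And>k. lead_coeff (p k) = 1"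
  shows "monom 1 \<beta> = (\<Sum>i\<le>\<beta>. smult (bcoef p \<beta> i) (p (\<beta> - i)))"
proof (rule poly_eqI)
  fix n
  show "coeff (monom 1 \<beta>) n = coeff (\<Sum>i\<le>\<beta>. smult (bcoef p \<beta> i) (p (\<beta> - i))) n"
  proof (cases "n \<le> \<beta>")
    case False
    then show ?thesis
      by (simp add: coeff_sum coeff_monom coeff_eq_0 deg)
  next
    case True
    define m where "m = \<beta> - n"
    have n: "n = \<beta> - m" and "m \<le> \<beta>"
      using True by (simp_all add: m_def)
    have "coeff (\<Sum>i\<le>\<beta>. smult (bcoef p \<beta> i) (p (\<beta> - i))) n
        = (\<Sum>i\<le>m. bcoef p \<beta> i * coeff (p (\<beta> - i)) (\<beta> - m))"
      unfolding coeff_sum coeff_smult n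
      by (rule sum.mono_neutral_right) (use \<open>m \<le> \<beta>\<close> in \<open>auto simp: coeff_eq_0 deg\<close>)
    also have "\<dots> = bcoef p \<beta> m + (\<Sum>i<m. bcoef p \<beta> i * coeff (p (\<beta> - i)) (\<beta> - m))"
      using \<open>m \<le> \<beta>\<close> monic deg by (simp add: lessThan_Suc_atMost[symmetric])
    also have "\<dots> = (if m = 0 then 1 else 0)"
      by (subst bcoef.simps) simp
    also have "\<dots> = coeff (monom 1 \<beta>) n"
      using \<open>m \<le> \<beta>\<close> by (auto simp: n coeff_monom)
    finally show ?thesis
      by simp
  qed
qed

theorem proposition2:
  fixes \<alpha> :: real and p q :: "nat \<Rightarrow> real poly" and h :: "nat \<Rightarrow> real"
  assumes "\<alpha> > -1"
    and "\<And>k. degree (p k) = k" and "\<And>k. lead_coeff (p k) = 1"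
    and "\<And>k. degree (q k) = k" and "\<And>k. lead_coeff (q k) = 1"
    and "\<And>k l. dbl_int (\<lambda>x y. poly (p k) x * poly (q l) y * CL_weight \<alpha> x y)
                 = (if k = l then h k else 0)"
    and "k \<le> \<beta>"
  shows "dbl_int (\<lambda>x y. x ^ \<beta> * poly (q k) y * CL_weight \<alpha> x y) = bcoef p \<beta> (\<beta> - k) * h k"
proof -
  have "x ^ \<beta> = (\<Sum>i\<le>\<beta>. bcoef p \<beta> i * poly (p (\<beta> - i)) x)" for x
    using arg_cong[OF monom_eq_sum_bcoef[OF assms(2,3)], of "\<lambda>P. poly P x"]
    by (simp add: poly_monom poly_sum)
  then have "dbl_int (\<lambda>x y. x ^ \<beta> * poly (q k) y * CL_weight \<alpha> x y)
      = dbl_int (\<lambda>x y. \<Sum>i\<le>\<beta>. bcoef p \<beta> i * (poly (p (\<beta> - i)) x * poly (q k) y * CL_weight \<alpha> x y))"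
    by (simp add: sum_distrib_right mult.assoc)
  also have "\<dots> = (\<Sum>i\<le>\<beta>. bcoef p \<beta> i *
      dbl_int (\<lambda>x y. poly (p (\<beta> - i)) x * poly (q k) y * CL_weight \<alpha> x y))"
    using assms(1) by (intro dbl_int_sum set_integrable_poly_CL_weight) auto
  also have "\<dots> = (\<Sum>i\<le>\<beta>. if i = \<beta> - k then bcoef p \<beta> i * h k else 0)"
    using assms(6,7) by (intro sum.cong) auto
  also have "\<dots> = bcoef p \<beta> (\<beta> - k) * h k"
    by simp
  finally show ?thesis .
qed

end
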